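(* Let $\mathcal B\subseteq P(D)$ be a Boolean algebra with $|\mathcal B|<\mathfrak b$ and let $\mathcal S=\{S_n:n\in\omega\}$ be an $s$-family with each $S_n(k)\in\mathcal B$. For $g\in\omega^\omega$ let $X_g=\bigcup_{n\in\omega}S_n(g(n))$. Then there exists $g_0\in\omega^\omega$ such that for every $g\in\omega^\omega$ with $g\ge g_0$ (pointwise) and every $A\in\mathcal B$ with $A\subseteq X_g$, there is $N\in\omega$ with $A\subseteq\bigcup_{j\le N}S_j(g(j))$.
   Context: $\mathfrak b$ is the bounding number. $\lambda$ is the product measure on $2^\omega$, $D\subseteq 2^\omega$ a fixed countable dense set, $\mathcal A_0$ the subalgebra of $P(D)$ generated by $\{C\cap D: C \text{ clopen}\}$ and the finite subsets of $D$, $\mu_0((C\cap D)\triangle F)=\lambda(C)$ for $C$ clopen and $F$ finite. An $s$-family is a countable family $\mathcal S$ of sequences $(S(k))_{k\in\omega}$ of elements of $\mathcal A_0$ with $S(0)\supseteq S(1)\supseteq\cdots$, $\bigcap_kS(k)=\emptyset$ and $\lim_k\mu_0(S(k))=0$. *)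

theory Defs
  imports "HOL-Analysis.Analysis" "HOL-Probability.Probability"
begin

text \<open>The Cantor space 2^omega is the type nat => bool, with the product topology
(bool discrete). lambda is the product (fair coin) measure.\<close>

definition clopen :: "(nat \<Rightarrow> bool) set \<Rightarrow> bool" where
  "clopen C \<longleftrightarrow> open C \<and> closed C"

definition cantor_measure :: "(nat \<Rightarrow> bool) measure" where
  "cantor_measure = PiM UNIV (\<lambda>_. measure_pmf (bernoulli_pmf (1/2)))"

definition A0 :: "(nat \<Rightarrow> bool) set \<Rightarrow> (nat \<Rightarrow> bool) set set" where
  "A0 D = \<Inter>{M. algebra D M \<and> {C \<inter> D | C. clopen C} \<subseteq> M \<and> {F. finite F \<and> F \<subseteq> D} \<subseteq> M}"

definition mu0 :: "(nat \<Rightarrow> bool) set \<Rightarrow> (nat \<Rightarrow> bool) set \<Rightarrow> real" where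
  "mu0 D X = measure cantor_measure
      (SOME C. clopen C \<and> (\<exists>F. finite F \<and> X = (C \<inter> D) \<union> F - ((C \<inter> D) \<inter> F)))"

definition s_sequence :: "(nat \<Rightarrow> bool) set \<Rightarrow> (nat \<Rightarrow> (nat \<Rightarrow> bool) set) \<Rightarrow> bool" where
  "s_sequence D S \<longleftrightarrow> (\<forall>k. S k \<in> A0 D) \<and> (\<forall>k. S (Suc k) \<subseteq> S k) \<and>
     (\<Inter>k. S k) = {} \<and> (\<lambda>k. mu0 D (S k)) \<longlonglongrightarrow> 0"

definition s_family :: "(nat \<Rightarrow> bool) set \<Rightarrow> (nat \<Rightarrow> nat \<Rightarrow> (nat \<Rightarrow> bool) set) \<Rightarrow> bool" where
  "s_family D S \<longleftrightarrow> (\<forall>n. s_sequence D (S n))"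

text \<open>Bounding number: a family F of functions is bounded if some h eventually
dominates every member. |B| < b means every family of size at most |B| is bounded.\<close>

definition bounded_family :: "(nat \<Rightarrow> nat) set \<Rightarrow> bool" where
  "bounded_family F \<longleftrightarrow> (\<exists>h. \<forall>f\<in>F. \<forall>\<^sub>F n in sequentially. f n \<le> h n)"

definition card_less_bounding :: "'a set \<Rightarrow> bool" where
  "card_less_bounding X \<longleftrightarrow>
     (\<forall>F::(nat \<Rightarrow> nat) set. (card_of F, card_of X) \<in> ordLeq \<longrightarrow> bounded_family F)"

end

theory Submission
  imports Defs
begin

text \<open>Every point of D leaves each S n from some index on. Dickson's lemma shows that, for a
fixed A and M, finitely many points of A witness every way of failing to cover A by the first
M sets; dominating the exit indices of these witnesses yields a function f_A such that any g
eventually above f_A covering A already covers it by finitely many S n (g n). Since |B| < b,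
a single g0 eventually dominates all the f_A.\<close>

lemma Dickson_finite_basis:
  fixes W :: "('a \<Rightarrow> nat) set"
  assumes "finite I"
  shows "\<exists>F. finite F \<and> F \<subseteq> W \<and> (\<forall>t\<in>W. \<exists>p\<in>F. \<forall>i\<in>I. p i \<le> t i)"
  using assms
proof (induction "card I" arbitrary: I W rule: less_induct)
  case less
  show ?case
  proof (cases "W = {}")
    case False
    then obtain w0 where w0: "w0 \<in> W" by auto
    have slice_basis: "\<exists>F. finite F \<and> F \<subseteq> {t\<in>W. t i = v} \<and>
        (\<forall>t\<in>{t\<in>W. t i = v}. \<exists>p\<in>F. \<forall>j\<in>I-{i}. p j \<le> t j)" if "i \<in> I" for i v
      using less.hyps[of "I - {i}" "{t\<in>W. t i = v}"] card_Diff1_less[OF less.prems that] less.prems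
      by auto
    define Fs where "Fs i v = (SOME F. finite F \<and> F \<subseteq> {t\<in>W. t i = v} \<and>
        (\<forall>t\<in>{t\<in>W. t i = v}. \<exists>p\<in>F. \<forall>j\<in>I-{i}. p j \<le> t j))" for i v
    have Fs: "finite (Fs i v) \<and> Fs i v \<subseteq> {t\<in>W. t i = v} \<and>
        (\<forall>t\<in>{t\<in>W. t i = v}. \<exists>p\<in>Fs i v. \<forall>j\<in>I-{i}. p j \<le> t j)" if "i \<in> I" for i v
      unfolding Fs_def using someI_ex[OF slice_basis[OF that, of v]] .
    \<comment> \<open>a t not above w0 has t i < w0 i for some i, and is then handled by the basis of the slice t i\<close>
    define F where "F = insert w0 (\<Union>i\<in>I. \<Union>v\<in>{..<w0 i}. Fs i v)"
    have "\<exists>p\<in>F. \<forall>i\<in>I. p i \<le> t i" if t: "t \<in> W" for t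
    proof (cases "\<forall>i\<in>I. w0 i \<le> t i")
      case True
      then show ?thesis unfolding F_def by auto
    next
      case False
      then obtain i where i: "i \<in> I" "t i < w0 i" by (auto simp: not_le)
      with Fs[OF i(1), of "t i"] t obtain p
        where p: "p \<in> Fs i (t i)" "p i = t i" "\<forall>j\<in>I-{i}. p j \<le> t j"
        by blast
      then have "\<forall>j\<in>I. p j \<le> t j" by (metis Diff_iff le_refl singletonD)
      moreover have "p \<in> F" unfolding F_def using i p(1) by blast
      ultimately show ?thesis by blast
    qed
    moreover have "finite F" "F \<subseteq> W" unfolding F_def using Fs less.prems w0 by auto
    ultimately show ?thesis by blast
  qed auto
qed

lemma finite_uncovered_witnesses:
  fixes S :: "nat \<Rightarrow> nat \<Rightarrow> 'a set"
  assumes "\<And>n. decseq (S n)"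
  shows "\<exists>X. finite X \<and> X \<subseteq> A \<and>
    (\<forall>t. \<not> A \<subseteq> (\<Union>j<M. S j (t j)) \<longrightarrow> (\<exists>x\<in>X. \<forall>j<M. x \<notin> S j (t j)))"
proof -
  let ?W = "{t. \<not> A \<subseteq> (\<Union>j<M. S j (t j))}"
  obtain F where F: "finite F" "F \<subseteq> ?W" "\<forall>t\<in>?W. \<exists>p\<in>F. \<forall>j\<in>{..<M}. p j \<le> t j"
    using Dickson_finite_basis[of "{..<M}" ?W] by auto
  have "\<exists>x. x \<in> A \<and> (\<forall>j<M. x \<notin> S j (p j))" if "p \<in> F" for p
    using F(2) that by blast
  then obtain x where x: "\<And>p. p \<in> F \<Longrightarrow> x p \<in> A \<and> (\<forall>j<M. x p \<notin> S j (p j))"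
    by metis
  have "\<exists>y\<in>x ` F. \<forall>j<M. y \<notin> S j (t j)" if "t \<in> ?W" for t
  proof -
    from F(3) that obtain p where "p \<in> F" "\<forall>j<M. p j \<le> t j" by (meson lessThan_iff)
    with x show ?thesis using decseqD[OF assms] by blast
  qed
  then show ?thesis using F(1) x by (intro exI[of _ "x ` F"]) auto
qed

lemma exists_escape_bound:
  fixes S :: "nat \<Rightarrow> nat \<Rightarrow> 'a set"
  assumes dec: "\<And>n. decseq (S n)" and empty: "\<And>n. (\<Inter>k. S n k) = {}"
  shows "\<exists>f. \<forall>M g. (\<forall>n\<ge>M. f n \<le> g n) \<longrightarrow> A \<subseteq> (\<Union>n. S n (g n)) \<longrightarrow>
    A \<subseteq> (\<Union>j<M. S j (g j))"
proof -
  have "\<forall>j x. \<exists>k. x \<notin> S j k" using empty by blast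
  then obtain exit where exit: "\<And>j x. x \<notin> S j (exit j x)" by (auto simp: choice_iff)
  have exit_le: "x \<notin> S j k" if "exit j x \<le> k" for j x k
    using exit decseqD[OF dec that] by blast
  obtain X where X: "\<And>M. finite (X M) \<and> X M \<subseteq> A \<and>
      (\<forall>t. \<not> A \<subseteq> (\<Union>j<M. S j (t j)) \<longrightarrow> (\<exists>x\<in>X M. \<forall>j<M. x \<notin> S j (t j)))"
    using finite_uncovered_witnesses[of S A, OF dec] by metis
  define f where "f j = (\<Sum>M\<le>j. \<Sum>x\<in>X M. exit j x)" for j
  have exit_le_f: "exit j x \<le> f j" if "M \<le> j" "x \<in> X M" for j M x
  proof -
    have "exit j x \<le> (\<Sum>x\<in>X M. exit j x)"
      using X that(2) by (intro member_le_sum) auto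
    also have "\<dots> \<le> f j"
      unfolding f_def using that(1) by (intro member_le_sum[of M "{..j}"]) auto
    finally show ?thesis .
  qed
  have "A \<subseteq> (\<Union>j<M. S j (g j))"
    if g: "\<forall>n\<ge>M. f n \<le> g n" and cover: "A \<subseteq> (\<Union>n. S n (g n))" for M g
  proof (rule ccontr)
    assume "\<not> ?thesis"
    with X obtain x where x: "x \<in> X M" "\<forall>j<M. x \<notin> S j (g j)" by blast
    have "x \<notin> S j (g j)" for j
    proof (cases "j < M")
      case False
      then have "exit j x \<le> g j" using exit_le_f[OF _ x(1)] g by (meson le_trans not_less)
      then show ?thesis by (rule exit_le)
    qed (use x in auto)
    moreover have "x \<in> A" using X x(1) by blast
    ultimately show False using cover by blast
  qed
  then show ?thesis by blast
qed

theorem lemma4p2: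
  fixes D :: "(nat \<Rightarrow> bool) set"
    and B :: "(nat \<Rightarrow> bool) set set"
    and S :: "nat \<Rightarrow> nat \<Rightarrow> (nat \<Rightarrow> bool) set"
  assumes "countable D" and "closure D = UNIV"
    and "algebra D B"
    and "card_less_bounding B"
    and "s_family D S"
    and "\<forall>n k. S n k \<in> B"
  shows "\<exists>g0 :: nat \<Rightarrow> nat. \<forall>g. (\<forall>n. g0 n \<le> g n) \<longrightarrow>
           (\<forall>A\<in>B. A \<subseteq> (\<Union>n. S n (g n)) \<longrightarrow> (\<exists>N. A \<subseteq> (\<Union>j\<le>N. S j (g j))))"
proof -
  have dec: "\<And>n. decseq (S n)" and empty: "\<And>n. (\<Inter>k. S n k) = {}"
    using assms(5) unfolding s_family_def s_sequence_def decseq_Suc_iff by blast+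
  have "\<forall>A. \<exists>f. \<forall>M g. (\<forall>n\<ge>M. f n \<le> g n) \<longrightarrow> A \<subseteq> (\<Union>n. S n (g n)) \<longrightarrow>
      A \<subseteq> (\<Union>j<M. S j (g j))"
    using exists_escape_bound[of S, OF dec empty] by blast
  then obtain f where f: "\<And>A M g. (\<forall>n\<ge>M. f A n \<le> g n) \<Longrightarrow> A \<subseteq> (\<Union>n. S n (g n)) \<Longrightarrow>
      A \<subseteq> (\<Union>j<M. S j (g j))"
    by (auto simp: choice_iff)
  have "bounded_family (f ` B)"
    using assms(4) card_of_image[of f B] unfolding card_less_bounding_def by blast
  then obtain h where h: "\<And>A. A \<in> B \<Longrightarrow> \<exists>M. \<forall>n\<ge>M. f A n \<le> h n"
    unfolding bounded_family_def eventually_sequentially by blast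
  have "\<exists>N. A \<subseteq> (\<Union>j\<le>N. S j (g j))"
    if "\<forall>n. h n \<le> g n" "A \<in> B" "A \<subseteq> (\<Union>n. S n (g n))" for g A
  proof -
    from h[OF that(2)] obtain M where "\<forall>n\<ge>M. f A n \<le> h n" by blast
    with that(1) have "\<forall>n\<ge>M. f A n \<le> g n" by (meson order.trans)
    from f[OF this that(3)] have "A \<subseteq> (\<Union>j<M. S j (g j))" .
    also have "\<dots> \<subseteq> (\<Union>j\<le>M. S j (g j))" by (rule UN_mono) auto
    finally show ?thesis ..
  qed
  then show ?thesis by (intro exI[of _ h]) blast
qed

end
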